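(* There exists an absolute constant $\xi>0$ such that for every $\rho<\xi$: if $T$ is an $\alpha$-approximate integral solution of the MMDA instance $G^{(\rho)}_{n,\ell}$, then $\alpha\ge n^{\Omega(1/\ell)}$.
   Context: MMDA: an $\alpha$-approximate integral solution of a layered instance with source $s$, sinks $L_\ell$ and required out-degrees $k_u$ is $T\subseteq E$ with $|\delta_T^+(s)|\ge k_s/\alpha$, every vertex of in-degree at most $1$ in $T$, and $|\delta^+_T(v)|\ge k_v/\alpha$ for every non-sink $v\ne s$ of in-degree $1$ in $T$. The instance $G^{(\rho)}_{n,\ell}$: integers $m$ and $1/\epsilon$ with $\epsilon\rho m\in\mathbb N$, $\ell=3/\epsilon$, $\epsilon m=\omega(\log m)$ (when $\ell=3$, $\epsilon=1$); ground set $[m]$. Each vertex $v$ has a label $S_v\subseteq[m]$: $L_0=\{s\}$ with $S_s=\emptyset$; for $1\le i<2/\epsilon$, $L_i$ has one vertex per subset of size $i\epsilon\rho m$; for $2/\epsilon\le i\le3/\epsilon$, one vertex per subset of size $(4-i\epsilon)\rho m$. For $u\in L_{i-1},v\in L_i$, edge $(u,v)$ iff $S_u\subseteq S_v$ ($i\le 2/\epsilon$) or $S_v\subseteq S_u$ ($i>2/\epsilon$). Sinks: $L_{3/\epsilon}$. With $\delta_i^+$ the out-degree of vertices in $L_i$, $k_v=\gamma_i\delta^+_i$ for $v\in L_i$, $i<\ell$, where $\gamma_i=\gamma'_1$ ($0\le i<1/\epsilon$), $\gamma'_2$ ($1/\epsilon\le i<2/\epsilon$), $\gamma'_3$ ($2/\epsilon\le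 i<3/\epsilon$), $\gamma'_1=\frac{(\epsilon\rho m)!}{((\rho m)!\binom{(1-\rho)m}{\rho m})^{\epsilon}}$, $\gamma'_2=\frac{(\epsilon\rho m)!}{((\rho m)!\binom{2\rho m}{\rho m})^{\epsilon}}$, $\gamma'_3=\frac{(\epsilon\rho m)!}{((\rho m)!)^{\epsilon}}$. $n$ is the number of vertices, $n=2^{\Theta(m)}$. *)

theory Defs
  imports Complex_Main
begin

text \<open>Parameters: m (ground set [m] = {..<m}),
  e = 1/epsilon (a positive integer), q = epsilon*rho*m (a natural number).
  Then l = 3e, rho*m = e*q, and the label sizes are
  layer i < 2e: i*q  (= i*epsilon*rho*m), layer 2e <= i <= 3e: (4e - i)*q (= (4 - i*epsilon)*rho*m).\<close>

definition lsize :: "nat \<Rightarrow> nat \<Rightarrow> nat \<Rightarrow> nat" where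
  "lsize e q i = (if i < 2*e then i*q else (4*e - i)*q)"

definition gverts :: "nat \<Rightarrow> nat \<Rightarrow> nat \<Rightarrow> (nat \<times> nat set) set" where
  "gverts m e q = {(i, S). i \<le> 3*e \<and> S \<subseteq> {..<m} \<and> card S = lsize e q i}"

definition gedges :: "nat \<Rightarrow> nat \<Rightarrow> nat \<Rightarrow> ((nat \<times> nat set) \<times> (nat \<times> nat set)) set" where
  "gedges m e q = {((i, S), (j, S')). (i, S) \<in> gverts m e q \<and> (j, S') \<in> gverts m e q \<and>
      j = Suc i \<and> (if j \<le> 2*e then S \<subseteq> S' else S' \<subseteq> S)}"

definition gsource :: "nat \<times> nat set" where
  "gsource = (0, {})"

definition gnum :: "nat \<Rightarrow> nat \<Rightarrow> nat \<Rightarrow> nat" where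
  "gnum m e q = card (gverts m e q)"

text \<open>gamma'_1, gamma'_2, gamma'_3 with epsilon = 1/e, rho*m = e*q, (1-rho)*m = m - e*q.\<close>
definition gam1 :: "nat \<Rightarrow> nat \<Rightarrow> nat \<Rightarrow> real" where
  "gam1 m e q = fact q / ((fact (e*q) * real ((m - e*q) choose (e*q))) powr (1 / real e))"

definition gam2 :: "nat \<Rightarrow> nat \<Rightarrow> real" where
  "gam2 e q = fact q / ((fact (e*q) * real ((2*(e*q)) choose (e*q))) powr (1 / real e))"

definition gam3 :: "nat \<Rightarrow> nat \<Rightarrow> real" where
  "gam3 e q = fact q / ((fact (e*q)) powr (1 / real e))"

definition gamma_layer :: "nat \<Rightarrow> nat \<Rightarrow> nat \<Rightarrow> nat \<Rightarrow> real" where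
  "gamma_layer m e q i = (if i < e then gam1 m e q else if i < 2*e then gam2 e q else gam3 e q)"

definition outn :: "('v \<times> 'v) set \<Rightarrow> 'v \<Rightarrow> 'v set" where
  "outn F v = {w. (v, w) \<in> F}"

definition inn :: "('v \<times> 'v) set \<Rightarrow> 'v \<Rightarrow> 'v set" where
  "inn F v = {u. (u, v) \<in> F}"

text \<open>Required out-degree k_v = gamma_i * delta_i^+ for v in layer i < l (all vertices of a layer
  have the same out-degree delta_i^+ in G).\<close>
definition kreq :: "nat \<Rightarrow> nat \<Rightarrow> nat \<Rightarrow> nat \<times> nat set \<Rightarrow> real" where
  "kreq m e q v = gamma_layer m e q (fst v) * real (card (outn (gedges m e q) v))"

definition approx_sol :: "nat \<Rightarrow> nat \<Rightarrow> nat \<Rightarrow> real \<Rightarrow> ((nat \<times> nat set) \<times> (nat \<times> nat set)) set \<Rightarrow> bool" where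
  "approx_sol m e q \<alpha> T \<longleftrightarrow>
     T \<subseteq> gedges m e q \<and>
     real (card (outn T gsource)) \<ge> kreq m e q gsource / \<alpha> \<and>
     (\<forall>v \<in> gverts m e q. card (inn T v) \<le> 1) \<and>
     (\<forall>v \<in> gverts m e q. fst v \<noteq> 3*e \<and> v \<noteq> gsource \<and> card (inn T v) = 1 \<longrightarrow>
        real (card (outn T v)) \<ge> kreq m e q v / \<alpha>)"

end

theory Submission
  imports Defs
begin

(*
  Let k = e q = rho m and s = k div 16. Every vertex of T has in-degree at most one, so the
  vertices reached from the source form a forest in which a vertex of layer i < 3e has at least
  gamma_i delta_i^+ / alpha children; hence a vertex reached in layer i has at least the product
  of these numbers as descendants j layers further down. Fix a vertex A reached in layer e. By
  the choice of gamma'_2 and gamma'_3 it has at least C(m-k,k) / (C(2k,k) alpha^e) descendants w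
  in layer 2e, and each of them has at least C(2k,k) / alpha^e descendant sinks. The sinks below w
  are labelled by distinct k-subsets of the 2k-set S_w, which contains S_A, and the sinks below
  different w are distinct. At most C(k,s) C(k+s,s) of the sinks below a single w meet S_A in at
  most s points, and at most C(k,s+1) C(m-s-1,k-s-1) sinks altogether meet S_A in more than s
  points. Hence C(2k,k) <= 2 C(k,s) C(k+s,s) alpha^e or C(m-k,k) <= 2 C(k,s+1) C(m-s-1,k-s-1)
  alpha^(2e). For k >= 240 and m >= 2^113 k the first alternative gives 2^k <= 2k alpha^e and the
  second 2^k <= alpha^(2e); as (2k)^2 <= 2^k, both yield alpha >= 2^(k/(2e)), and n <= 8^m turns
  this into alpha >= n^(rho/(6e)).
*)

section \<open>Binomial estimates\<close>

lemma pow_div_fact_le_exp: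
  fixes x :: real
  assumes "0 \<le> x"
  shows "x ^ n / fact n \<le> exp x"
proof -
  have "(\<lambda>n. x ^ n / fact n) sums exp x"
    using exp_converges[of x] by (simp add: divide_inverse_commute)
  then show ?thesis
    using sum_le_suminf[of "\<lambda>n. x ^ n / fact n" "{n}"] assms by (simp add: sums_iff)
qed

lemma binomial_le_exp_pow:
  assumes "0 < s"
  shows "real (n choose s) \<le> (exp 1 * real n / real s) ^ s"
proof -
  have "real (n choose s) * fact s \<le> real n ^ s"
    using binomial_fact_pow[of n s] by (metis of_nat_fact of_nat_le_iff of_nat_mult of_nat_power)
  then have "real (n choose s) \<le> real n ^ s / fact s"
    by (simp add: field_simps)
  also have "\<dots> \<le> real n ^ s * (exp (real s) / real s ^ s)"
  proof -
    have "1 / fact s \<le> exp (real s) / real s ^ s"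
      using pow_div_fact_le_exp[of "real s" s] assms by (simp add: field_simps)
    then have "real n ^ s * (1 / fact s) \<le> real n ^ s * (exp (real s) / real s ^ s)"
      by (rule mult_left_mono) simp
    then show ?thesis
      by simp
  qed
  also have "\<dots> = (exp 1 * real n / real s) ^ s"
    by (simp add: exp_of_nat_mult[symmetric] power_mult_distrib power_divide)
  finally show ?thesis .
qed

lemma binomial_le_64_pow:
  assumes "0 < s" "n \<le> 18 * s"
  shows "real (n choose s) \<le> 64 ^ s"
proof -
  have "real n / real s \<le> 18"
    using assms by (simp add: divide_le_eq)
  then have "exp 1 * (real n / real s) \<le> 3 * 18"
    using exp_le by (intro mult_mono) auto
  then have "(exp 1 * real n / real s) ^ s \<le> 64 ^ s"
    by (intro power_mono) (auto simp: field_simps)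
  then show ?thesis
    using binomial_le_exp_pow[OF assms(1), of n] by linarith
qed

lemma prod_binomial_telescope:
  assumes "e * q \<le> n"
  shows "(\<Prod>j<e. real ((n - j * q) choose q)) = fact n / (fact (n - e * q) * fact q ^ e)"
  using assms
proof (induction e)
  case (Suc e)
  have "(\<Prod>j<Suc e. real ((n - j * q) choose q))
      = fact n / (fact (n - e * q) * fact q ^ e) * real ((n - e * q) choose q)"
    using Suc by simp
  also have "real ((n - e * q) choose q) = fact (n - e * q) / (fact q * fact (n - e * q - q))"
    using Suc.prems by (intro binomial_fact) simp
  also have "n - e * q - q = n - Suc e * q"
    by simp
  finally show ?case
    by (simp add: field_simps)
qed simp

lemma small_Int_count_le_central_binomial:
  assumes "240 \<le> k" "s = k div 16"
  shows "2 * real ((k choose s) * ((k + s) choose s)) * 2 ^ k \<le> real ((2 * k) choose k) * (2 * real k)"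
proof -
  have s: "15 \<le> s" "16 * s \<le> k" "k \<le> 16 * s + 15"
    using assms by auto
  \<comment> \<open>\<open>240 = 16 * 15\<close>: \<open>s \<ge> 15\<close> gives \<open>k + s \<le> 18 s\<close>, as needed for \<open>binomial_le_64_pow\<close>\<close>
  have "real (k choose s) \<le> 64 ^ s" "real ((k + s) choose s) \<le> 64 ^ s"
    using s by (intro binomial_le_64_pow; simp)+
  then have "2 * real ((k choose s) * ((k + s) choose s)) * 2 ^ k \<le> 2 * (64 ^ s * 64 ^ s) * 2 ^ k"
    by (simp add: mult_mono)
  also have "\<dots> = 2 ^ (1 + 12 * s + k)"
    by (simp add: power_add power_mult flip: power_mult_distrib)
  also have "\<dots> \<le> (2::real) ^ (2 * k)"
    using s by (intro power_increasing) auto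
  also have "\<dots> = 4 ^ k"
    by (simp add: power_mult)
  also have "\<dots> \<le> real ((2 * k) choose k) * (2 * real k)"
    using central_binomial_lower_bound[of k] assms(1) by (simp add: field_simps)
  finally show ?thesis .
qed

lemma large_Int_count_le_binomial:
  assumes "16 \<le> k" "s = k div 16" "2 ^ 113 * real k \<le> real m"
  shows "2 * real ((k choose Suc s) * ((m - Suc s) choose (k - Suc s))) * 2 ^ k
    \<le> real ((m - k) choose k)"
proof -
  \<comment> \<open>With \<open>L = m / (2k)\<close> the left-hand side is at most \<open>2 4^k 16^r L^r\<close> and the
    right-hand side at least \<open>L^k = L^(s+1) L^r\<close>; as \<open>k < 16 (s + 1)\<close>, the factor
    \<open>L^(s+1) \<ge> 2^(112 (s+1))\<close> absorbs \<open>2 4^k 16^r\<close>. This is where \<open>m \<ge> 2^113 k\<close> comes from.\<close>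
  define r where "r = k - Suc s"
  define L where "L = real m / (2 * real k)"
  have r: "k = Suc s + r" "k \<le> 2 * r" "0 < r"
    using assms(1,2) by (auto simp: r_def)
  have kpos: "0 < real k"
    using assms(1) by simp
  have L: "2 ^ 112 \<le> L"
    using assms(3) kpos by (simp add: L_def field_simps)
  have "real (2 * k) \<le> real m"
    using assms(3) kpos by simp
  then have mk: "2 * k \<le> m"
    by (simp only: of_nat_le_iff)
  have "exp 1 * real (m - Suc s) / real r \<le> 3 * real m / (real k / 2)"
    using exp_le r(2,3) kpos by (intro frac_le mult_mono) auto
  also have "\<dots> \<le> 16 * L"
    using kpos by (simp add: L_def field_simps)
  finally have "(exp 1 * real (m - Suc s) / real r) ^ r \<le> (16 * L) ^ r"
    by (intro power_mono) auto
  then have "real ((m - Suc s) choose r) \<le> (16 * L) ^ r"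
    using binomial_le_exp_pow[OF r(3), of "m - Suc s"] by linarith
  moreover have "real (k choose Suc s) \<le> 2 ^ k"
    using binomial_le_pow2[of k "Suc s"] by (metis of_nat_le_iff of_nat_numeral of_nat_power)
  ultimately have "2 * real ((k choose Suc s) * ((m - Suc s) choose r)) * 2 ^ k
      \<le> 2 * (2 ^ k * (16 * L) ^ r) * 2 ^ k"
    by (simp add: mult_mono)
  also have "\<dots> = (2 * 4 ^ k * 16 ^ r) * L ^ r"
    by (simp add: power_mult_distrib flip: power_mult_distrib[of "2::real" 2])
  also have "\<dots> \<le> L ^ Suc s * L ^ r"
  proof (rule mult_right_mono)
    have "(2::real) * 4 ^ k * 16 ^ r = 2 ^ (1 + 2 * k + 4 * r)"
      by (simp add: power_add power_mult)
    also have "\<dots> \<le> 2 ^ (112 * Suc s)"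
      using r assms(1,2) by (intro power_increasing) auto
    also have "\<dots> = (2 ^ 112) ^ Suc s"
      by (rule power_mult)
    also have "\<dots> \<le> L ^ Suc s"
      using L by (intro power_mono) auto
    finally show "2 * 4 ^ k * 16 ^ r \<le> L ^ Suc s" .
  qed (use L in simp)
  also have "\<dots> = L ^ k"
    by (simp add: r(1) power_add)
  also have "\<dots> \<le> (real (m - k) / real k) ^ k"
    using L mk kpos by (intro power_mono) (auto simp: L_def field_simps)
  also have "\<dots> \<le> real ((m - k) choose k)"
    using mk by (intro binomial_ge_n_over_k_pow_k) simp
  finally show ?thesis
    by (simp add: r_def)
qed

lemma square_double_le_two_pow:
  assumes "16 \<le> k"
  shows "(2 * k) ^ 2 \<le> (2::nat) ^ k"
  using assms
proof (induction k rule: nat_induct_at_least)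
  case (Suc k)
  have "16 * k \<le> k * k"
    using Suc.hyps by simp
  moreover have "(2 * Suc k) ^ 2 = 4 * (k * k) + 8 * k + 4" "(2 * k) ^ 2 = 4 * (k * k)"
    by (simp_all add: power2_eq_square algebra_simps)
  ultimately have "(2 * Suc k) ^ 2 \<le> 2 * (2 * k) ^ 2"
    using Suc.hyps by linarith
  then show ?case
    using Suc.IH by simp
qed simp

section \<open>Counting \<open>k\<close>-sets by their intersection with a fixed set\<close>

lemma card_supersets:
  assumes "finite X" "U \<subseteq> X"
  shows "card {S. S \<subseteq> X \<and> U \<subseteq> S \<and> card S = card U + r} = (card X - card U) choose r"
proof -
  have "bij_betw (\<lambda>S. S - U) {S. S \<subseteq> X \<and> U \<subseteq> S \<and> card S = card U + r}
      {R. R \<subseteq> X - U \<and> card R = r}"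
  proof (rule bij_betw_byWitness[where f' = "\<lambda>R. R \<union> U"])
    show "(\<lambda>S. S - U) ` {S. S \<subseteq> X \<and> U \<subseteq> S \<and> card S = card U + r} \<subseteq> {R. R \<subseteq> X - U \<and> card R = r}"
    proof clarify
      fix S assume "S \<subseteq> X" "U \<subseteq> S" "card S = card U + r"
      moreover have "finite S"
        using \<open>S \<subseteq> X\<close> assms(1) finite_subset by blast
      ultimately show "S - U \<subseteq> X - U \<and> card (S - U) = r"
        using finite_subset[of U S] by (auto simp: card_Diff_subset)
    qed
    show "(\<lambda>R. R \<union> U) ` {R. R \<subseteq> X - U \<and> card R = r} \<subseteq> {S. S \<subseteq> X \<and> U \<subseteq> S \<and> card S = card U + r}"
    proof clarify
      fix R assume "R \<subseteq> X - U"
      moreover have "finite R" "finite U" "R \<inter> U = {}"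
        using \<open>R \<subseteq> X - U\<close> assms finite_subset by blast+
      ultimately show "R \<union> U \<subseteq> X \<and> U \<subseteq> R \<union> U \<and> card (R \<union> U) = card U + card R"
        using assms(2) by (auto simp: card_Un_disjoint add.commute)
    qed
  qed blast+
  then have "card {S. S \<subseteq> X \<and> U \<subseteq> S \<and> card S = card U + r} = card (X - U) choose r"
    using assms by (simp add: bij_betw_same_card n_subsets)
  then show ?thesis
    using assms by (simp add: card_Diff_subset finite_subset)
qed

lemma card_subsets_small_Int:
  assumes "finite B" "A \<subseteq> B" "card A = k" "card B = 2 * k" "s \<le> k"
  shows "card {S. S \<subseteq> B \<and> card S = k \<and> card (S \<inter> A) \<le> s} \<le> (k choose s) * ((k + s) choose s)"
proof -
  let ?Us = "{U. U \<subseteq> B - A \<and> card U = k - s}"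
  let ?F = "\<lambda>U. {S. S \<subseteq> B \<and> U \<subseteq> S \<and> card S = card U + s}"
  have "{S. S \<subseteq> B \<and> card S = k \<and> card (S \<inter> A) \<le> s} \<subseteq> (\<Union>U\<in>?Us. ?F U)"
  proof
    fix S assume "S \<in> {S. S \<subseteq> B \<and> card S = k \<and> card (S \<inter> A) \<le> s}"
    then have S: "S \<subseteq> B" "card (S \<inter> A) \<le> s" "card S = k"
      by auto
    have "card (S - A) = card S - card (S \<inter> A)"
      using S(1) assms(1) finite_subset by (blast intro: card_Diff_subset_Int)
    then have "k - s \<le> card (S - A)"
      using S by simp
    then obtain U where U: "U \<subseteq> S - A" "card U = k - s"
      by (meson obtain_subset_with_card_n)
    then have "U \<in> ?Us"
      using S(1) by auto
    moreover have "S \<in> ?F U"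
      using U S assms(5) by auto
    ultimately show "S \<in> (\<Union>U\<in>?Us. ?F U)"
      by blast
  qed
  then have "card {S. S \<subseteq> B \<and> card S = k \<and> card (S \<inter> A) \<le> s} \<le> card (\<Union>U\<in>?Us. ?F U)"
    using assms(1) by (intro card_mono) (auto intro: finite_subset[of _ "Pow B"])
  also have "\<dots> \<le> (\<Sum>U\<in>?Us. card (?F U))"
    using assms(1) by (intro card_UN_le) simp
  also have "\<dots> = (\<Sum>U\<in>?Us. (k + s) choose s)"
  proof (rule sum.cong[OF refl])
    fix U assume "U \<in> ?Us"
    then show "card (?F U) = (k + s) choose s"
      using card_supersets[of B U s] assms by auto
  qed
  also have "\<dots> = (card (B - A) choose (k - s)) * ((k + s) choose s)"
    using assms(1) by (simp add: n_subsets)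
  also have "card (B - A) choose (k - s) = k choose s"
    using assms by (simp add: card_Diff_subset finite_subset binomial_symmetric[symmetric])
  finally show ?thesis .
qed

lemma card_subsets_large_Int:
  assumes "finite X" "A \<subseteq> X" "card A = k" "s < k"
  shows "card {S. S \<subseteq> X \<and> card S = k \<and> s < card (S \<inter> A)}
    \<le> (k choose Suc s) * ((card X - Suc s) choose (k - Suc s))"
proof -
  let ?Us = "{U. U \<subseteq> A \<and> card U = Suc s}"
  let ?F = "\<lambda>U. {S. S \<subseteq> X \<and> U \<subseteq> S \<and> card S = card U + (k - Suc s)}"
  have "{S. S \<subseteq> X \<and> card S = k \<and> s < card (S \<inter> A)} \<subseteq> (\<Union>U\<in>?Us. ?F U)"
  proof
    fix S assume "S \<in> {S. S \<subseteq> X \<and> card S = k \<and> s < card (S \<inter> A)}"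
    then have S: "S \<subseteq> X" "s < card (S \<inter> A)" "card S = k"
      by auto
    then have "Suc s \<le> card (S \<inter> A)"
      by simp
    then obtain U where U: "U \<subseteq> S \<inter> A" "card U = Suc s"
      by (meson obtain_subset_with_card_n)
    then have "U \<in> ?Us"
      by auto
    moreover have "S \<in> ?F U"
      using U S assms(4) by auto
    ultimately show "S \<in> (\<Union>U\<in>?Us. ?F U)"
      by blast
  qed
  then have "card {S. S \<subseteq> X \<and> card S = k \<and> s < card (S \<inter> A)} \<le> card (\<Union>U\<in>?Us. ?F U)"
    using assms(1) by (intro card_mono) (auto intro: finite_subset[of _ "Pow X"])
  also have "\<dots> \<le> (\<Sum>U\<in>?Us. card (?F U))"
    using finite_subset[OF assms(2,1)] by (intro card_UN_le) simp
  also have "\<dots> = (\<Sum>U\<in>?Us. (card X - Suc s) choose (k - Suc s))"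
  proof (rule sum.cong[OF refl])
    fix U assume "U \<in> ?Us"
    then show "card (?F U) = (card X - Suc s) choose (k - Suc s)"
      using card_supersets[of X U "k - Suc s"] assms by auto
  qed
  also have "\<dots> = (k choose Suc s) * ((card X - Suc s) choose (k - Suc s))"
    using finite_subset[OF assms(2,1)] assms(3) by (simp add: n_subsets)
  finally show ?thesis .
qed

lemma sum_card_disjoint_families_le:
  assumes "finite W" "finite X" "A \<subseteq> X" "card A = k" "s < k"
    and B: "\<And>w. w \<in> W \<Longrightarrow> A \<subseteq> B w \<and> B w \<subseteq> X \<and> card (B w) = 2 * k"
    and F: "\<And>w. w \<in> W \<Longrightarrow> F w \<subseteq> {S. S \<subseteq> B w \<and> card S = k}"
    and disj: "\<And>w w'. w \<in> W \<Longrightarrow> w' \<in> W \<Longrightarrow> w \<noteq> w' \<Longrightarrow> F w \<inter> F w' = {}"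
  shows "(\<Sum>w\<in>W. card (F w))
    \<le> card W * ((k choose s) * ((k + s) choose s))
      + (k choose Suc s) * ((card X - Suc s) choose (k - Suc s))"
proof -
  define small where "small w = {S \<in> F w. card (S \<inter> A) \<le> s}" for w
  define large where "large w = {S \<in> F w. s < card (S \<inter> A)}" for w
  have finB: "finite (B w)" if "w \<in> W" for w
    using B[OF that] assms(2) finite_subset by blast
  have fin: "finite (F w)" if "w \<in> W" for w
    using F[OF that] finB[OF that] finite_subset[of "F w" "Pow (B w)"] by auto
  have "card (F w) = card (small w) + card (large w)" if "w \<in> W" for w
  proof -
    have "F w = small w \<union> large w" "small w \<inter> large w = {}"
      unfolding small_def large_def by auto
    then show ?thesis
      using fin[OF that] card_Un_disjoint[of "small w" "large w"] by (metis finite_Un)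
  qed
  then have "(\<Sum>w\<in>W. card (F w)) = (\<Sum>w\<in>W. card (small w)) + (\<Sum>w\<in>W. card (large w))"
    by (simp add: sum.distrib)
  also have "(\<Sum>w\<in>W. card (small w)) \<le> (\<Sum>w\<in>W. (k choose s) * ((k + s) choose s))"
  proof (rule sum_mono)
    fix w assume w: "w \<in> W"
    have "small w \<subseteq> {S. S \<subseteq> B w \<and> card S = k \<and> card (S \<inter> A) \<le> s}"
      using F[OF w] unfolding small_def by auto
    then have "card (small w) \<le> card {S. S \<subseteq> B w \<and> card S = k \<and> card (S \<inter> A) \<le> s}"
      using finB[OF w] by (intro card_mono) (auto intro: finite_subset[of _ "Pow (B w)"])
    also have "\<dots> \<le> (k choose s) * ((k + s) choose s)"
      using B[OF w] finB[OF w] assms by (intro card_subsets_small_Int) auto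
    finally show "card (small w) \<le> (k choose s) * ((k + s) choose s)" .
  qed
  also have "(\<Sum>w\<in>W. card (large w)) = card (\<Union>w\<in>W. large w)"
    using assms(1) fin disj unfolding large_def by (intro card_UN_disjoint[symmetric]) auto
  also have "\<dots> \<le> card {S. S \<subseteq> X \<and> card S = k \<and> s < card (S \<inter> A)}"
  proof (rule card_mono)
    show "finite {S. S \<subseteq> X \<and> card S = k \<and> s < card (S \<inter> A)}"
      using assms(2) by (auto intro: finite_subset[of _ "Pow X"])
    show "(\<Union>w\<in>W. large w) \<subseteq> {S. S \<subseteq> X \<and> card S = k \<and> s < card (S \<inter> A)}"
      using F B unfolding large_def by blast
  qed
  also have "\<dots> \<le> (k choose Suc s) * ((card X - Suc s) choose (k - Suc s))"
    by (rule card_subsets_large_Int[OF assms(2-5)])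
  finally show ?thesis
    by simp
qed

section \<open>Descendants in an edge set with unique parents\<close>

fun desc :: "('v \<times> 'v) set \<Rightarrow> nat \<Rightarrow> 'v \<Rightarrow> 'v set" where
  "desc T 0 v = {v}"
| "desc T (Suc j) v = (\<Union>u\<in>desc T j v. outn T u)"

lemma desc_add: "desc T (a + b) v = (\<Union>w\<in>desc T a v. desc T b w)"
  by (induction b) auto

lemma desc_mono: "T \<subseteq> T' \<Longrightarrow> desc T j v \<subseteq> desc T' j v"
  by (induction j) (auto simp: outn_def)

lemma finite_outn: "finite T \<Longrightarrow> finite (outn T u)"
  by (rule finite_subset[of _ "snd ` T"]) (force simp: outn_def)+

lemma finite_desc: "finite T \<Longrightarrow> finite (desc T j v)"
  by (induction j) (auto simp: finite_outn)

context
  fixes T :: "('v \<times> 'v) set"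
  assumes unique_parent: "\<And>u u' w. (u, w) \<in> T \<Longrightarrow> (u', w) \<in> T \<Longrightarrow> u = u'"
begin

lemma desc_disjoint: "u \<noteq> u' \<Longrightarrow> desc T j u \<inter> desc T j u' = {}"
proof (induction j)
  case (Suc j)
  show ?case
  proof (rule ccontr)
    assume "desc T (Suc j) u \<inter> desc T (Suc j) u' \<noteq> {}"
    then obtain x a a' where "a \<in> desc T j u" "a' \<in> desc T j u'" "(a, x) \<in> T" "(a', x) \<in> T"
      by (auto simp: outn_def)
    then show False
      using Suc unique_parent by blast
  qed
qed simp

lemma card_desc_Suc:
  assumes "finite T"
  shows "card (desc T (Suc j) v) = (\<Sum>u\<in>desc T j v. card (outn T u))"
  unfolding desc.simps
proof (rule card_UN_disjoint)
  show "finite (desc T j v)"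
    using assms by (rule finite_desc)
  show "\<forall>u\<in>desc T j v. finite (outn T u)"
    using assms by (simp add: finite_outn)
  show "\<forall>u\<in>desc T j v. \<forall>u'\<in>desc T j v. u \<noteq> u' \<longrightarrow> outn T u \<inter> outn T u' = {}"
    using unique_parent by (auto simp: outn_def)
qed

lemma prod_le_card_desc:
  assumes "finite T" "\<And>i. 0 \<le> x i"
    and "\<And>i u. i < j \<Longrightarrow> u \<in> desc T i v \<Longrightarrow> x i \<le> real (card (outn T u))"
  shows "(\<Prod>i<j. x i) \<le> real (card (desc T j v))"
  using assms(3)
proof (induction j)
  case (Suc j)
  have "(\<Prod>i<Suc j. x i) \<le> real (card (desc T j v)) * x j"
    using Suc assms(2) by (simp add: mult_right_mono)
  also have "\<dots> = (\<Sum>u\<in>desc T j v. x j)"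
    by simp
  also have "\<dots> \<le> (\<Sum>u\<in>desc T j v. real (card (outn T u)))"
    using Suc.prems by (intro sum_mono) simp
  also have "\<dots> = real (card (desc T (Suc j) v))"
    using card_desc_Suc[OF assms(1)] by simp
  finally show ?case .
qed simp

end

section \<open>The layered instance\<close>

(* The out-degree delta_i^+ of the vertices of layer i < 3e, see card_outn_gedges. *)
definition gdeg :: "nat \<Rightarrow> nat \<Rightarrow> nat \<Rightarrow> nat \<Rightarrow> nat" where
  "gdeg m e q i = (if i < 2 * e then (m - i * q) choose q else ((4 * e - i) * q) choose q)"

lemma finite_gverts: "finite (gverts m e q)"
  by (rule finite_subset[of _ "{..3 * e} \<times> Pow {..<m}"]) (auto simp: gverts_def)

lemma card_gverts_le: "card (gverts m e q) \<le> (3 * e + 1) * 2 ^ m"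
proof -
  have "card (gverts m e q) \<le> card ({..3 * e} \<times> Pow {..<m})"
    by (rule card_mono) (auto simp: gverts_def)
  then show ?thesis
    by (simp add: card_cartesian_product card_Pow)
qed

lemma gnum_le_two_powr:
  assumes "e \<le> m"
  shows "real (gnum m e q) \<le> 2 powr (3 * real m)"
proof -
  have "real (3 * e + 1) \<le> 4 ^ m"
    using Bernoulli_inequality[of "3::real" m] assms by simp
  then have "real (3 * e + 1) * 2 ^ m \<le> 4 ^ m * 2 ^ m"
    by (rule mult_right_mono) simp
  then have "real ((3 * e + 1) * 2 ^ m) \<le> 4 ^ m * 2 ^ m"
    by (simp only: of_nat_mult of_nat_power of_nat_numeral)
  then have "real (gnum m e q) \<le> 4 ^ m * 2 ^ m"
    using card_gverts_le[of m e q] unfolding gnum_def by (meson of_nat_le_iff order_trans)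
  also have "(4::real) ^ m * 2 ^ m = 2 ^ (3 * m)"
    by (simp add: power_mult flip: power_mult_distrib)
  also have "\<dots> = 2 powr (3 * real m)"
    by (simp flip: powr_realpow)
  finally show ?thesis .
qed

lemma gedgesD:
  assumes "(v, w) \<in> gedges m e q"
  shows "v \<in> gverts m e q" "w \<in> gverts m e q" "fst w = Suc (fst v)"
    and "if fst w \<le> 2 * e then snd v \<subseteq> snd w else snd w \<subseteq> snd v"
  using assms by (auto simp: gedges_def)

lemma finite_gedges: "finite (gedges m e q)"
  by (rule finite_subset[of _ "gverts m e q \<times> gverts m e q"])
    (auto dest: gedgesD simp: finite_gverts)

lemma card_outn_gedges:
  assumes v: "(i, S) \<in> gverts m e q" and i: "i < 3 * e"
  shows "card (outn (gedges m e q) (i, S)) = gdeg m e q i"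
proof -
  define N where "N = {S'. S' \<subseteq> {..<m} \<and> card S' = lsize e q (Suc i)
    \<and> (if Suc i \<le> 2 * e then S \<subseteq> S' else S' \<subseteq> S)}"
  have S: "S \<subseteq> {..<m}" "card S = lsize e q i"
    using v by (auto simp: gverts_def)
  have "outn (gedges m e q) (i, S) = Pair (Suc i) ` N"
    using v i by (auto simp: outn_def gedges_def gverts_def N_def)
  then have "card (outn (gedges m e q) (i, S)) = card N"
    by (simp add: card_image inj_on_def)
  also have "card N = gdeg m e q i"
  proof (cases "i < 2 * e")
    case True
    then have "Suc i < 2 * e \<or> 4 * e - Suc i = Suc i"
      by linarith
    then have "lsize e q (Suc i) = card S + q"
      using S True by (auto simp: lsize_def)
    then have "N = {S'. S' \<subseteq> {..<m} \<and> S \<subseteq> S' \<and> card S' = card S + q}"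
      using True by (auto simp: N_def)
    then show ?thesis
      using card_supersets[OF _ S(1), of q] S True by (simp add: gdeg_def lsize_def)
  next
    case False
    have "1 * q \<le> (4 * e - i) * q"
      using i by (intro mult_le_mono1) linarith
    then have "q \<le> card S"
      using S False by (simp add: lsize_def)
    moreover have "lsize e q (Suc i) = card S - q"
      using S False i by (auto simp: lsize_def diff_mult_distrib)
    ultimately have "N = {S'. S' \<subseteq> S \<and> card S' = card S - q}"
      using False S(1) by (auto simp: N_def)
    then have "card N = card S choose q"
      using S(1) \<open>q \<le> card S\<close>
      by (simp add: n_subsets finite_subset binomial_symmetric[symmetric])
    then show ?thesis
      using S False by (simp add: gdeg_def lsize_def)
  qed
  finally show ?thesis .
qed

lemma desc_gedges_fst: "u \<in> desc (gedges m e q) j v \<Longrightarrow> fst u = fst v + j"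
  by (induction j arbitrary: u) (auto simp: outn_def dest: gedgesD)

lemma desc_gedges_subset: "v \<in> gverts m e q \<Longrightarrow> desc (gedges m e q) j v \<subseteq> gverts m e q"
  by (induction j) (auto simp: outn_def dest: gedgesD)

lemma desc_gedges_label_increasing:
  "fst v + j \<le> 2 * e \<Longrightarrow> u \<in> desc (gedges m e q) j v \<Longrightarrow> snd v \<subseteq> snd u"
proof (induction j arbitrary: u)
  case (Suc j)
  then obtain a where a: "a \<in> desc (gedges m e q) j v" "(a, u) \<in> gedges m e q"
    by (auto simp: outn_def)
  then have "fst u \<le> 2 * e"
    using Suc.prems(1) desc_gedges_fst[OF a(1)] gedgesD(3)[OF a(2)] by simp
  moreover have "snd v \<subseteq> snd a"
    using Suc.IH[OF _ a(1)] Suc.prems(1) by simp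
  ultimately show ?case
    using gedgesD(4)[OF a(2)] by auto
qed simp

lemma desc_gedges_label_decreasing:
  "2 * e \<le> fst v \<Longrightarrow> u \<in> desc (gedges m e q) j v \<Longrightarrow> snd u \<subseteq> snd v"
proof (induction j arbitrary: u)
  case (Suc j)
  then obtain a where a: "a \<in> desc (gedges m e q) j v" "(a, u) \<in> gedges m e q"
    by (auto simp: outn_def)
  then have "\<not> fst u \<le> 2 * e"
    using Suc.prems(1) desc_gedges_fst[OF a(1)] gedgesD(3)[OF a(2)] by simp
  moreover have "snd a \<subseteq> snd v"
    using Suc.IH[OF _ a(1)] Suc.prems(1) by simp
  ultimately show ?case
    using gedgesD(4)[OF a(2)] by auto
qed simp

(* Without 2 k <= m the binomial coefficient in gam1 vanishes, and so does gam1. *)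
lemma gamma_layer_pos: "2 * (e * q) \<le> m \<Longrightarrow> 0 < gamma_layer m e q i"
  by (auto simp: gamma_layer_def gam1_def gam2_def gam3_def)

lemma gdeg_pos:
  assumes "2 * (e * q) \<le> m" "i < 3 * e"
  shows "0 < gdeg m e q i"
proof (cases "i < 2 * e")
  case True
  then have "Suc i * q \<le> 2 * e * q"
    by (intro mult_le_mono1) simp
  then show ?thesis
    using True assms(1) by (simp add: gdeg_def)
next
  case False
  have "1 * q \<le> (4 * e - i) * q"
    using assms(2) by (intro mult_le_mono1) linarith
  then show ?thesis
    using False by (simp add: gdeg_def)
qed

lemma divide_powr_inverse_power:
  fixes c X :: real
  assumes "0 < X" "0 < e"
  shows "(c / X powr (1 / real e)) ^ e = c ^ e / X"
  using assms by (simp add: power_divide root_powr_inverse[symmetric])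

lemma prod_gamma_gdeg_middle:
  assumes "1 \<le> e" "2 * (e * q) \<le> m"
  shows "(\<Prod>i<e. gamma_layer m e q (e + i) * gdeg m e q (e + i))
    = real ((m - e * q) choose (e * q)) / real ((2 * (e * q)) choose (e * q))"
proof -
  let ?k = "e * q"
  have "(\<Prod>i<e. gamma_layer m e q (e + i) * gdeg m e q (e + i))
      = gam2 e q ^ e * (\<Prod>i<e. real ((m - ?k - i * q) choose q))"
    by (simp add: gamma_layer_def gdeg_def prod.distrib algebra_simps diff_diff_left)
  also have "\<dots> = fact q ^ e / (fact ?k * real ((2 * ?k) choose ?k))
      * (fact (m - ?k) / (fact (m - ?k - ?k) * fact q ^ e))"
    using assms prod_binomial_telescope[of e q "m - ?k"]
    by (simp add: gam2_def divide_powr_inverse_power)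
  also have "\<dots> = real ((m - ?k) choose ?k) / real ((2 * ?k) choose ?k)"
    using assms binomial_fact[of ?k "m - ?k", where 'a = real] by (simp add: field_simps)
  finally show ?thesis .
qed

lemma prod_gamma_gdeg_last:
  assumes "1 \<le> e"
  shows "(\<Prod>i<e. gamma_layer m e q (2 * e + i) * gdeg m e q (2 * e + i))
    = real ((2 * (e * q)) choose (e * q))"
proof -
  let ?k = "e * q"
  have "(4 * e - (2 * e + i)) * q = 2 * ?k - i * q" for i
    by (simp add: diff_mult_distrib algebra_simps)
  then have "(\<Prod>i<e. gamma_layer m e q (2 * e + i) * gdeg m e q (2 * e + i))
      = gam3 e q ^ e * (\<Prod>i<e. real ((2 * ?k - i * q) choose q))"
    by (simp add: gamma_layer_def gdeg_def prod.distrib)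
  also have "\<dots> = fact q ^ e / fact ?k * (fact (2 * ?k) / (fact (2 * ?k - ?k) * fact q ^ e))"
    using assms prod_binomial_telescope[of e q "2 * ?k"]
    by (simp add: gam3_def divide_powr_inverse_power)
  also have "\<dots> = real ((2 * ?k) choose ?k)"
    using binomial_fact[of ?k "2 * ?k", where 'a = real] by (simp add: field_simps)
  finally show ?thesis .
qed

section \<open>Lower bound on the approximation factor\<close>

locale mmda_solution =
  fixes m e q :: nat and \<alpha> :: real and T :: "((nat \<times> nat set) \<times> (nat \<times> nat set)) set"
  assumes e_pos: "1 \<le> e" and m_large: "2 * (e * q) \<le> m" and alpha_pos: "0 < \<alpha>"
    and sol: "approx_sol m e q \<alpha> T"
begin

lemma T_subset: "T \<subseteq> gedges m e q"
  using sol by (simp add: approx_sol_def)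

lemma finite_T: "finite T"
  using T_subset finite_gedges finite_subset by blast

lemma finite_inn: "finite (inn T w)"
  by (rule finite_subset[of _ "fst ` T"]) (force simp: inn_def finite_T)+

lemma unique_parent:
  assumes "(u, w) \<in> T" "(u', w) \<in> T"
  shows "u = u'"
proof -
  have "w \<in> gverts m e q"
    using assms(1) T_subset gedgesD(2) by blast
  then have "card (inn T w) \<le> 1"
    using sol by (simp add: approx_sol_def)
  moreover have "u \<in> inn T w" "u' \<in> inn T w"
    using assms by (auto simp: inn_def)
  ultimately show ?thesis
    using finite_inn[of w] card_le_Suc0_iff_eq by auto
qed

lemma desc_T_disjoint: "u \<noteq> u' \<Longrightarrow> desc T j u \<inter> desc T j u' = {}"
  using desc_disjoint[of T] unique_parent by blast

lemma reached_gverts: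
  assumes "u \<in> desc T j gsource"
  shows "u \<in> gverts m e q" "fst u = j" "snd u \<subseteq> {..<m}" "card (snd u) = lsize e q j"
proof -
  have u: "u \<in> desc (gedges m e q) j gsource"
    using assms desc_mono[OF T_subset] by blast
  have "gsource \<in> gverts m e q"
    using e_pos by (simp add: gsource_def gverts_def lsize_def)
  then show "u \<in> gverts m e q"
    using u desc_gedges_subset by blast
  show "fst u = j"
    using desc_gedges_fst[OF u] by (simp add: gsource_def)
  then show "snd u \<subseteq> {..<m}" "card (snd u) = lsize e q j"
    using \<open>u \<in> gverts m e q\<close> by (auto simp: gverts_def)
qed

lemma outdeg_reached:
  assumes u: "u \<in> desc T j gsource" and j: "j < 3 * e"
  shows "gamma_layer m e q j * gdeg m e q j / \<alpha> \<le> real (card (outn T u))"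
proof -
  have uG: "u \<in> gverts m e q" and fst_u: "fst u = j"
    using reached_gverts[OF u] by auto
  have "kreq m e q u / \<alpha> \<le> real (card (outn T u))"
  proof (cases j)
    case 0
    then show ?thesis
      using u sol by (simp add: approx_sol_def)
  next
    case (Suc i)
    then obtain a where "(a, u) \<in> T"
      using u by (auto simp: outn_def)
    then have "a \<in> inn T u"
      by (simp add: inn_def)
    then have "card (inn T u) \<noteq> 0"
      using finite_inn[of u] by auto
    moreover have "card (inn T u) \<le> 1"
      using sol uG by (simp add: approx_sol_def)
    ultimately have "card (inn T u) = 1"
      by simp
    moreover have "u \<noteq> gsource" "fst u \<noteq> 3 * e"
      using fst_u Suc j by (auto simp: gsource_def)
    ultimately show ?thesis
      using sol uG by (simp add: approx_sol_def)
  qed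
  moreover have "card (outn (gedges m e q) u) = gdeg m e q j"
    using card_outn_gedges[of "fst u" "snd u" m e q] uG j fst_u by (metis prod.collapse)
  ultimately show ?thesis
    by (simp add: kreq_def fst_u)
qed

lemma reached_trans: "v \<in> desc T a gsource \<Longrightarrow> u \<in> desc T j v \<Longrightarrow> u \<in> desc T (a + j) gsource"
  using desc_add by fast

lemma reached_label_mono:
  assumes v: "v \<in> desc T a gsource" and u: "u \<in> desc T j v"
  shows "a + j \<le> 2 * e \<Longrightarrow> snd v \<subseteq> snd u" and "2 * e \<le> a \<Longrightarrow> snd u \<subseteq> snd v"
proof -
  have "u \<in> desc (gedges m e q) j v"
    using u desc_mono[OF T_subset] by blast
  then show "a + j \<le> 2 * e \<Longrightarrow> snd v \<subseteq> snd u" "2 * e \<le> a \<Longrightarrow> snd u \<subseteq> snd v"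
    using desc_gedges_label_increasing desc_gedges_label_decreasing reached_gverts(2)[OF v]
    by simp_all
qed

lemma reached_eqI:
  "u \<in> desc T j gsource \<Longrightarrow> u' \<in> desc T j gsource \<Longrightarrow> snd u = snd u' \<Longrightarrow> u = u'"
  using reached_gverts(2) by (simp add: prod_eq_iff)

lemma card_desc_reached:
  assumes "v \<in> desc T a gsource" "a + j \<le> 3 * e"
  shows "(\<Prod>i<j. gamma_layer m e q (a + i) * gdeg m e q (a + i)) / \<alpha> ^ j
    \<le> real (card (desc T j v))"
proof -
  have "(\<Prod>i<j. gamma_layer m e q (a + i) * gdeg m e q (a + i) / \<alpha>) \<le> real (card (desc T j v))"
  proof (rule prod_le_card_desc[OF unique_parent finite_T])
    show "0 \<le> gamma_layer m e q (a + i) * gdeg m e q (a + i) / \<alpha>" for i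
      using gamma_layer_pos[OF m_large] alpha_pos by (simp add: less_imp_le)
    fix i u assume "i < j" "u \<in> desc T i v"
    then show "gamma_layer m e q (a + i) * gdeg m e q (a + i) / \<alpha> \<le> real (card (outn T u))"
      using outdeg_reached reached_trans[OF assms(1)] assms(2) by simp
  qed
  then show ?thesis
    by (simp add: prod_dividef)
qed

lemma reached_nonempty:
  assumes "j \<le> 3 * e"
  shows "desc T j gsource \<noteq> {}"
proof -
  have "0 < (\<Prod>i<j. gamma_layer m e q i * gdeg m e q i) / \<alpha> ^ j"
    using gamma_layer_pos[OF m_large] gdeg_pos[OF m_large] alpha_pos assms
    by (intro divide_pos_pos prod_pos) auto
  also have "\<dots> \<le> real (card (desc T j gsource))"
    using card_desc_reached[of gsource 0 j] assms by simp
  finally show ?thesis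
    by auto
qed

lemma sum_card_sinks_le:
  assumes A: "A \<in> desc T e gsource" and s: "s < e * q"
  shows "(\<Sum>w\<in>desc T e A. card (desc T e w))
    \<le> card (desc T e A) * ((e * q choose s) * ((e * q + s) choose s))
      + (e * q choose Suc s) * ((m - Suc s) choose (e * q - Suc s))"
proof -
  let ?k = "e * q" and ?W = "desc T e A"
  have W: "w \<in> desc T (2 * e) gsource" if "w \<in> ?W" for w
    using reached_trans[OF A that] by (simp add: mult_2)
  have sink: "u \<in> desc T (3 * e) gsource" if "w \<in> ?W" "u \<in> desc T e w" for w u
    using reached_trans[OF W that(2)] that(1) by simp
  have "(\<Sum>w\<in>?W. card (desc T e w)) = (\<Sum>w\<in>?W. card (snd ` desc T e w))"
    using sink reached_eqI by (intro sum.cong refl card_image[symmetric] inj_onI) blast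
  also have "\<dots> \<le> card ?W * ((?k choose s) * ((?k + s) choose s))
      + (?k choose Suc s) * ((card {..<m} - Suc s) choose (?k - Suc s))"
  proof (rule sum_card_disjoint_families_le)
    show "snd A \<subseteq> {..<m}" "card (snd A) = ?k"
      using reached_gverts[OF A] e_pos by (auto simp: lsize_def)
    fix w assume w: "w \<in> ?W"
    show "snd A \<subseteq> snd w \<and> snd w \<subseteq> {..<m} \<and> card (snd w) = 2 * ?k"
      using reached_label_mono(1)[OF A w] reached_gverts[OF W[OF w]] e_pos by (auto simp: lsize_def)
    show "snd ` desc T e w \<subseteq> {S. S \<subseteq> snd w \<and> card S = ?k}"
      using reached_label_mono(2)[OF W[OF w]] reached_gverts(4)[OF sink[OF w]] e_pos
      by (auto simp: lsize_def)
  next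
    fix w w' assume w: "w \<in> ?W" "w' \<in> ?W" "w \<noteq> w'"
    show "snd ` desc T e w \<inter> snd ` desc T e w' = {}"
      using desc_T_disjoint[OF w(3), of e] sink[OF w(1)] sink[OF w(2)] reached_eqI by blast
  qed (simp_all add: finite_desc finite_T s)
  finally show ?thesis
    by simp
qed

lemma sinks_count_le:
  assumes A: "A \<in> desc T e gsource" and "s < e * q"
  shows "real (card (desc T e A)) * (real ((2 * (e * q)) choose (e * q)) / \<alpha> ^ e)
    \<le> real (card (desc T e A)) * real ((e * q choose s) * ((e * q + s) choose s))
      + real ((e * q choose Suc s) * ((m - Suc s) choose (e * q - Suc s)))"
proof -
  have "real ((2 * (e * q)) choose (e * q)) / \<alpha> ^ e \<le> real (card (desc T e w))"
    if "w \<in> desc T e A" for w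
    using card_desc_reached[OF reached_trans[OF A that], of e] prod_gamma_gdeg_last[OF e_pos]
    by (simp add: mult_2)
  then have "real (card (desc T e A)) * (real ((2 * (e * q)) choose (e * q)) / \<alpha> ^ e)
      \<le> (\<Sum>w\<in>desc T e A. real (card (desc T e w)))"
    using sum_mono[of "desc T e A" "\<lambda>_. real ((2 * (e * q)) choose (e * q)) / \<alpha> ^ e"] by simp
  also have "\<dots> \<le> real (card (desc T e A)) * real ((e * q choose s) * ((e * q + s) choose s))
      + real ((e * q choose Suc s) * ((m - Suc s) choose (e * q - Suc s)))"
    using sum_card_sinks_le[OF assms]
    by (metis (mono_tags) of_nat_add of_nat_le_iff of_nat_mult of_nat_sum)
  finally show ?thesis .
qed

lemma alpha_dichotomy:
  assumes "s < e * q"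
  shows "real ((2 * (e * q)) choose (e * q))
      \<le> 2 * real ((e * q choose s) * ((e * q + s) choose s)) * \<alpha> ^ e
    \<or> real ((m - e * q) choose (e * q))
      \<le> 2 * real ((e * q choose Suc s) * ((m - Suc s) choose (e * q - Suc s))) * \<alpha> ^ (2 * e)"
    (is "?C2 \<le> 2 * ?\<beta> * _ \<or> ?C1 \<le> 2 * ?\<Gamma> * _")
proof (cases "?C2 \<le> 2 * ?\<beta> * \<alpha> ^ e")
  case False
  define a where "a = \<alpha> ^ e"
  have a: "0 < a" "\<alpha> ^ (2 * e) = a * a"
    using alpha_pos by (simp_all add: a_def mult_2 power_add)
  have C2: "0 < ?C2"
    by simp
  have \<beta>: "?\<beta> \<le> ?C2 / a / 2"
    using False a by (simp add: a_def field_simps)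
  obtain A where A: "A \<in> desc T e gsource"
    using reached_nonempty[of e] by auto
  let ?W = "real (card (desc T e A))"
  have "?C1 / ?C2 / a \<le> ?W"
    using card_desc_reached[OF A, of e] prod_gamma_gdeg_middle[OF e_pos m_large] by (simp add: a_def)
  then have "?C1 / ?C2 / a * (?C2 / a / 2) \<le> ?W * (?C2 / a / 2)"
    using a C2 by (intro mult_right_mono) auto
  also have "\<dots> \<le> ?\<Gamma>"
    using sinks_count_le[OF A assms] mult_left_mono[OF \<beta>, of ?W] by (simp add: a_def)
  also have "?C1 / ?C2 / a * (?C2 / a / 2) = ?C1 / (2 * (a * a))"
    using a C2 by (simp add: field_simps)
  finally have "?C1 \<le> 2 * ?\<Gamma> * \<alpha> ^ (2 * e)"
    using a by (simp add: divide_le_eq mult_ac)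
  then show ?thesis ..
qed simp

lemma two_pow_le_alpha_power_cases:
  assumes "240 \<le> e * q" "2 ^ 113 * real (e * q) \<le> real m"
  shows "2 ^ (e * q) \<le> \<alpha> ^ e * (2 * real (e * q)) \<or> 2 ^ (e * q) \<le> \<alpha> ^ (2 * e)"
proof -
  define k where "k = e * q"
  define s where "s = k div 16"
  have "s < k"
    using assms(1) by (simp add: s_def k_def)
  have "k \<le> m"
    using m_large by (simp add: k_def)
  have "real ((2 * k) choose k) \<le> 2 * real ((k choose s) * ((k + s) choose s)) * \<alpha> ^ e
    \<or> real ((m - k) choose k)
      \<le> 2 * real ((k choose Suc s) * ((m - Suc s) choose (k - Suc s))) * \<alpha> ^ (2 * e)"
    using alpha_dichotomy[of s] \<open>s < k\<close> by (simp add: k_def)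
  then show ?thesis
  proof (elim disjE)
    let ?\<beta> = "real ((k choose s) * ((k + s) choose s))"
    assume "real ((2 * k) choose k) \<le> 2 * ?\<beta> * \<alpha> ^ e"
    have "240 \<le> k"
      using assms(1) by (simp add: k_def)
    then have "2 * ?\<beta> * 2 ^ k \<le> real ((2 * k) choose k) * (2 * real k)"
      using s_def by (rule small_Int_count_le_central_binomial)
    also have "\<dots> \<le> 2 * ?\<beta> * \<alpha> ^ e * (2 * real k)"
      using \<open>real ((2 * k) choose k) \<le> 2 * ?\<beta> * \<alpha> ^ e\<close> by (rule mult_right_mono) simp
    finally show ?thesis
      using \<open>s < k\<close> by (simp add: k_def mult_ac)
  next
    define \<Gamma> where "\<Gamma> = 2 * real ((k choose Suc s) * ((m - Suc s) choose (k - Suc s)))"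
    assume "real ((m - k) choose k)
      \<le> 2 * real ((k choose Suc s) * ((m - Suc s) choose (k - Suc s))) * \<alpha> ^ (2 * e)"
    then have "\<Gamma> * 2 ^ k \<le> \<Gamma> * \<alpha> ^ (2 * e)"
      using large_Int_count_le_binomial[of k s m] assms by (simp add: \<Gamma>_def k_def s_def)
    moreover have "0 < \<Gamma>"
      using \<open>s < k\<close> \<open>k \<le> m\<close> by (simp add: \<Gamma>_def)
    ultimately show ?thesis
      by (simp add: k_def)
  qed
qed

lemma two_pow_le_alpha_power:
  assumes "240 \<le> e * q" "2 ^ 113 * real (e * q) \<le> real m"
  shows "2 ^ (e * q) \<le> \<alpha> ^ (2 * e)"
  using two_pow_le_alpha_power_cases[OF assms]
proof
  define k where "k = e * q"
  assume "2 ^ (e * q) \<le> \<alpha> ^ e * (2 * real (e * q))"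
  then have "(2 ^ k) ^ 2 \<le> (\<alpha> ^ e * (2 * real k)) ^ 2"
    by (intro power_mono) (simp_all add: k_def)
  also have "\<dots> = \<alpha> ^ (2 * e) * (2 * real k) ^ 2"
    by (simp add: power_mult_distrib mult.commute flip: power_mult)
  also have "\<dots> \<le> \<alpha> ^ (2 * e) * 2 ^ k"
  proof (rule mult_left_mono)
    have "16 \<le> k"
      using assms(1) by (simp add: k_def)
    then have "real ((2 * k) ^ 2) \<le> real ((2::nat) ^ k)"
      by (simp only: of_nat_le_iff square_double_le_two_pow)
    then show "(2 * real k) ^ 2 \<le> 2 ^ k"
      by simp
  qed (use alpha_pos in simp)
  finally show "2 ^ (e * q) \<le> \<alpha> ^ (2 * e)"
    by (simp add: power2_eq_square k_def)
qed

end

lemma approx_sol_gnum_powr_le_alpha: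
  assumes sol: "approx_sol m e q \<alpha> T" and "0 < \<alpha>" "1 \<le> e"
    and k: "240 \<le> e * q" "2 ^ 113 * real (e * q) \<le> real m"
  shows "real (gnum m e q) powr (real (e * q) / (6 * real e * real m)) \<le> \<alpha>"
proof -
  define k where "k = e * q"
  have "0 < k"
    using k(1) unfolding k_def by linarith
  have "real (2 * k) \<le> real m"
    using k \<open>0 < k\<close> by (simp add: k_def)
  then have "2 * k \<le> m"
    by (simp only: of_nat_le_iff)
  then interpret mmda_solution m e q \<alpha> T
    using assms by unfold_locales (simp_all add: k_def)
  have "(2 ^ k) powr (1 / real (2 * e)) \<le> (\<alpha> ^ (2 * e)) powr (1 / real (2 * e))"
    using two_pow_le_alpha_power[OF k] by (intro powr_mono2) (auto simp: k_def)
  then have alpha_ge: "2 powr (real k / (2 * real e)) \<le> \<alpha>"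
    using alpha_pos e_pos by (simp add: powr_realpow[symmetric] powr_powr)
  have "real (gnum m e q) powr (real k / (6 * real e * real m))
      \<le> (2 powr (3 * real m)) powr (real k / (6 * real e * real m))"
  proof (rule powr_mono2)
    have "e \<le> e * q"
      using \<open>0 < k\<close> by (simp add: k_def)
    then show "real (gnum m e q) \<le> 2 powr (3 * real m)"
      using m_large by (intro gnum_le_two_powr) linarith
  qed simp_all
  also have "\<dots> = 2 powr (real k / (2 * real e))"
    using \<open>0 < k\<close> \<open>2 * k \<le> m\<close> by (simp add: powr_powr)
  finally show ?thesis
    using alpha_ge by (simp add: k_def)
qed

lemma div_mult_ln_le_max:
  assumes "1 \<le> E"
  shows "real M / (real E * ln (real M)) \<le> max 4 (real M)"
proof (cases "3 \<le> M")
  case True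
  then have "1 \<le> ln (real M)"
    using exp_le by (subst ln_ge_iff) auto
  then have "1 * 1 \<le> real E * ln (real M)"
    using assms by (intro mult_mono) auto
  then have "real M / (real E * ln (real M)) \<le> real M"
    by (simp add: divide_le_eq mult_le_cancel_left1)
  then show ?thesis
    by simp
next
  case False
  then consider "M \<le> 1" | "M = 2"
    by linarith
  then show ?thesis
  proof cases
    case 1
    then have "ln (real M) \<le> 0"
      by (cases M) auto
    then have "real M / (real E * ln (real M)) \<le> 0"
      by (intro divide_nonneg_nonpos mult_nonneg_nonpos) auto
    then show ?thesis
      by simp
  next
    case 2
    have "1 / 2 \<le> ln (2::real)"
      using exp_half_le2 by (subst ln_ge_iff) auto
    then have "1 * (1 / 2) \<le> real E * ln 2"
      using assms by (intro mult_mono) auto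
    then show ?thesis
      using 2 by (simp add: divide_le_eq)
  qed
qed

lemma filterlim_at_top_if_div_mult_ln:
  assumes "\<And>j. 1 \<le> E j"
    and "filterlim (\<lambda>j. real (M j) / (real (E j) * ln (real (M j)))) at_top F"
  shows "filterlim (\<lambda>j. real (M j)) at_top F"
  unfolding filterlim_at_top
proof
  fix Z :: real
  have "\<forall>\<^sub>F j in F. max 5 Z \<le> real (M j) / (real (E j) * ln (real (M j)))"
    using assms(2) unfolding filterlim_at_top by blast
  then show "\<forall>\<^sub>F j in F. Z \<le> real (M j)"
  proof (rule eventually_mono)
    fix j
    assume "max 5 Z \<le> real (M j) / (real (E j) * ln (real (M j)))"
    then have "max 5 Z \<le> max 4 (real (M j))"
      using div_mult_ln_le_max[OF assms(1)] by (rule order_trans)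
    then show "Z \<le> real (M j)"
      by (simp add: le_max_iff_disj)
  qed
qed

lemma approx_sol_gnum_powr_le_alpha_rho:
  assumes "approx_sol m e q \<alpha> T" "0 < \<alpha>" "1 \<le> e"
    and q: "real q = \<rho> * real m / real e" and \<rho>: "0 < \<rho>" "\<rho> < 1 / 2 ^ 113"
    and m: "240 / \<rho> \<le> real m"
  shows "real (gnum m e q) powr (\<rho> / 2 / real (3 * e)) \<le> \<alpha>"
proof -
  have k: "real (e * q) = \<rho> * real m"
    using q assms(3) by simp
  have "240 \<le> \<rho> * real m"
    using m \<rho> by (simp add: divide_le_eq mult.commute)
  then have "real 240 \<le> real (e * q)"
    using k by simp
  then have k240: "240 \<le> e * q"
    by (simp only: of_nat_le_iff)
  have "2 ^ 113 * \<rho> \<le> 1"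
    using \<rho> by (simp add: field_simps)
  then have km: "2 ^ 113 * real (e * q) \<le> real m"
    using mult_right_mono[of "2 ^ 113 * \<rho>" 1 "real m"] k by simp
  have "0 < real m"
    using \<open>240 \<le> \<rho> * real m\<close> by (cases "m = 0") auto
  then have "\<rho> / 2 / real (3 * e) = \<rho> * real m / (6 * real e * real m)"
    by (simp add: field_simps)
  also have "\<dots> = real (e * q) / (6 * real e * real m)"
    by (simp only: k)
  finally show ?thesis
    using approx_sol_gnum_powr_le_alpha[OF assms(1-3) k240 km] by simp
qed

lemma eventually_gnum_powr_le_alpha:
  fixes \<rho> :: real and M E Q :: "nat \<Rightarrow> nat"
  assumes \<rho>: "0 < \<rho>" "\<rho> < 1 / 2 ^ 113" and E: "\<forall>j. 1 \<le> E j"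
    and Q: "\<forall>j. real (Q j) = \<rho> * real (M j) / real (E j)"
    and lim: "filterlim (\<lambda>j. real (M j) / (real (E j) * ln (real (M j)))) at_top sequentially"
  shows "\<forall>\<^sub>F j in sequentially. \<forall>\<alpha> T. 0 < \<alpha> \<and> approx_sol (M j) (E j) (Q j) \<alpha> T \<longrightarrow>
    real (gnum (M j) (E j) (Q j)) powr (\<rho> / 2 / real (3 * E j)) \<le> \<alpha>"
proof -
  have "\<forall>\<^sub>F j in sequentially. 240 / \<rho> \<le> real (M j)"
    using filterlim_at_top_if_div_mult_ln[OF _ lim] E by (simp add: filterlim_at_top)
  then show ?thesis
    by (rule eventually_mono) (use approx_sol_gnum_powr_le_alpha_rho \<rho> E Q in blast)
qed

theorem lemma9:
  shows "\<exists>\<xi>>0. \<forall>\<rho>::real. 0 < \<rho> \<and> \<rho> < \<xi> \<longrightarrow>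
    (\<exists>c>0. \<forall>M E Q :: nat \<Rightarrow> nat.
       (\<forall>j. 1 \<le> E j) \<and>
       (\<forall>j. real (Q j) = \<rho> * real (M j) / real (E j)) \<and>
       filterlim (\<lambda>j. real (M j) / (real (E j) * ln (real (M j)))) at_top sequentially
       \<longrightarrow> (\<forall>\<^sub>F j in sequentially. \<forall>(\<alpha>::real) T. 0 < \<alpha> \<and> approx_sol (M j) (E j) (Q j) \<alpha> T \<longrightarrow>
              \<alpha> \<ge> real (gnum (M j) (E j) (Q j)) powr (c / real (3 * E j))))"
proof (rule exI[where x = "1 / 2 ^ 113"], intro conjI allI impI)
  fix \<rho> :: real
  assume "0 < \<rho> \<and> \<rho> < 1 / 2 ^ 113"
  then show "\<exists>c>0. \<forall>M E Q :: nat \<Rightarrow> nat.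
       (\<forall>j. 1 \<le> E j) \<and>
       (\<forall>j. real (Q j) = \<rho> * real (M j) / real (E j)) \<and>
       filterlim (\<lambda>j. real (M j) / (real (E j) * ln (real (M j)))) at_top sequentially
       \<longrightarrow> (\<forall>\<^sub>F j in sequentially. \<forall>(\<alpha>::real) T. 0 < \<alpha> \<and> approx_sol (M j) (E j) (Q j) \<alpha> T \<longrightarrow>
              \<alpha> \<ge> real (gnum (M j) (E j) (Q j)) powr (c / real (3 * E j)))"
    using eventually_gnum_powr_le_alpha by (intro exI[where x = "\<rho> / 2"]) auto
qed simp

end
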